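(* Let $\mapsto_S$ be the indexed small-step head-reduction relation on legal top-level terms and $\mapsto_T$ the named small-step head-reduction relation on pure $\lambda$-terms, with reflexive–transitive closures $\mapsto_S^*$, $\mapsto_T^*$. Then: (1) for legal top-level terms $t, t'$, $t \mapsto_S^* t'$ implies $t^* \mapsto_T^* t'^*$; (2) for pure $\lambda$-terms $v, v'$, $v \mapsto_T^* v'$ implies $v^\# \mapsto_S^* v'^\#$; (3) for every legal top-level term $t$, $t \mapsto_S^* t^{*\#}$, and for every pure $\lambda$-term $v$, $v^{\#*} = v$.
   Context: Pure $\lambda$-terms: $v ::= x \mid v\,v \mid \lambda x.v$, with capture-avoiding substitution $v[v'/x]$. Indexed semantics $\mapsto_S$. Indices $i ::= \mathrm{zero} \mid \mathrm{succ}(i)$. Terms $v ::= x \mid v\,v \mid \lambda x.v \mid i$. Top-level terms $t ::= v \mid \lambda.t$. Evaluation contexts $E ::= \Box \mid E\,v$. Top-level contexts $S ::= \Box \mid \lambda.S$. $\mathrm{Count}(\Box)=\mathrm{zero}$, $\mathrm{Count}(\lambda.S)=\mathrm{succ}(\mathrm{Count}(S))$. Rules: ($\beta$) $S[E[(\lambda x.v)\,v']] \mapsto_S S[E[v[v'/x]]]$; (non-$\beta$) $S[\lambda x.v] \mapsto_S S[\lambda.v[\mathrm{Count}(S)/x]]$. Readback rule: $S[\lambda.v] \hookrightarrow S[\lambda x.v[x/\mathrm{Count}(S)]]$ with $x$ fresh, where $v[x/i]$ replaces every occurrence of index $i$ in $v$ by $x$. A top-level term $S[v]$ is legal iff every index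 $i$ occurring in $v$ satisfies $i<\mathrm{Count}(S)$. Named semantics $\mapsto_T$. Evaluation contexts $E ::= \Box \mid E\,v$; top-level contexts $S ::= E \mid \lambda x.S$; rule $S[(\lambda x.v)\,v'] \mapsto_T S[v[v'/x]]$. Translations: for a legal top-level term $t$, $t^*$ is the (pure $\lambda$-term) normal form of $t$ with respect to the readback rule $\hookrightarrow$; for a pure $\lambda$-term $v$, $v^\#$ is the normal form of $v$ with respect to the non-$\beta$ rule of $\mapsto_S$. *)

theory Defs
  imports Main
begin

text \<open>Terms are represented up to alpha-equivalence using de Bruijn indices for
  the named (lambda-bound or free) variables x.  The constructor Idx i is the
  paper's index i (zero / succ(i) rendered as nat), a constant that is never
  bound or shifted.\<close>

datatype trm = Var nat | App trm trm | Lam trm | Idx nat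

datatype top = Tm trm | TLam top

fun idxs :: "trm \<Rightarrow> nat set" where
  "idxs (Var n) = {}"
| "idxs (App s u) = idxs s \<union> idxs u"
| "idxs (Lam s) = idxs s"
| "idxs (Idx i) = {i}"

definition pure :: "trm \<Rightarrow> bool" where
  "pure v \<longleftrightarrow> idxs v = {}"

fun legal_at :: "nat \<Rightarrow> top \<Rightarrow> bool" where
  "legal_at k (Tm v) \<longleftrightarrow> (\<forall>i\<in>idxs v. i < k)"
| "legal_at k (TLam t) \<longleftrightarrow> legal_at (Suc k) t"

definition legal :: "top \<Rightarrow> bool" where
  "legal t \<longleftrightarrow> legal_at 0 t"

fun lift :: "nat \<Rightarrow> trm \<Rightarrow> trm" where
  "lift k (Var n) = (if n < k then Var n else Var (Suc n))"
| "lift k (App s u) = App (lift k s) (lift k u)"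
| "lift k (Lam s) = Lam (lift (Suc k) s)"
| "lift k (Idx i) = Idx i"

fun subst :: "trm \<Rightarrow> nat \<Rightarrow> trm \<Rightarrow> trm" where
  "subst (Var n) k s = (if n < k then Var n else if n = k then s else Var (n - 1))"
| "subst (App a b) k s = App (subst a k s) (subst b k s)"
| "subst (Lam a) k s = Lam (subst a (Suc k) (lift 0 s))"
| "subst (Idx i) k s = Idx i"

text \<open>v[x/i] followed by binding x: replace index i by the variable bound by a
  new lambda placed on top (at depth d), shifting free variables.\<close>
fun abst :: "nat \<Rightarrow> nat \<Rightarrow> trm \<Rightarrow> trm" where
  "abst i d (Var n) = (if n < d then Var n else Var (Suc n))"
| "abst i d (App a b) = App (abst i d a) (abst i d b)"
| "abst i d (Lam a) = Lam (abst i (Suc d) a)"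
| "abst i d (Idx j) = (if j = i then Var d else Idx j)"

text \<open>Beta step in an evaluation context E ::= [] | E v.\<close>
inductive hred :: "trm \<Rightarrow> trm \<Rightarrow> bool" where
  beta: "hred (App (Lam v) v') (subst v 0 v')"
| appL: "hred s s' \<Longrightarrow> hred (App s u) (App s' u)"

text \<open>Named semantics: S ::= E | lambda x.S.\<close>
inductive stepT :: "trm \<Rightarrow> trm \<Rightarrow> bool" where
  E: "hred s s' \<Longrightarrow> stepT s s'"
| L: "stepT s s' \<Longrightarrow> stepT (Lam s) (Lam s')"

text \<open>Indexed semantics; the nat parameter is Count(S) of the surrounding
  top-level context.\<close>
inductive stepS_at :: "nat \<Rightarrow> top \<Rightarrow> top \<Rightarrow> bool" where
  beta: "hred v v' \<Longrightarrow> stepS_at k (Tm v) (Tm v')"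
| nonbeta: "stepS_at k (Tm (Lam v)) (TLam (Tm (subst v 0 (Idx k))))"
| ctx: "stepS_at (Suc k) t t' \<Longrightarrow> stepS_at k (TLam t) (TLam t')"

definition stepS :: "top \<Rightarrow> top \<Rightarrow> bool" where
  "stepS = stepS_at 0"

inductive nonbeta_at :: "nat \<Rightarrow> top \<Rightarrow> top \<Rightarrow> bool" where
  nonbeta: "nonbeta_at k (Tm (Lam v)) (TLam (Tm (subst v 0 (Idx k))))"
| ctx: "nonbeta_at (Suc k) t t' \<Longrightarrow> nonbeta_at k (TLam t) (TLam t')"

text \<open>Readback rule: S[lambda.v] --> S[lambda x. v[x/Count(S)]].\<close>
inductive readback_at :: "nat \<Rightarrow> top \<Rightarrow> top \<Rightarrow> bool" where
  rb: "readback_at k (TLam (Tm v)) (Tm (Lam (abst k 0 v)))"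
| ctx: "readback_at (Suc k) t t' \<Longrightarrow> readback_at k (TLam t) (TLam t')"

definition star :: "top \<Rightarrow> trm" where
  "star t = (THE v. (readback_at 0)\<^sup>*\<^sup>* t (Tm v) \<and> (\<nexists>u. readback_at 0 (Tm v) u))"

definition sharp :: "trm \<Rightarrow> top" where
  "sharp v = (THE t. (nonbeta_at 0)\<^sup>*\<^sup>* (Tm v) t \<and> (\<nexists>u. nonbeta_at 0 t u))"

end

theory Submission
  imports Defs
begin

text \<open>The readback normal form of
  \<open>\<lambda>. t\<close> at depth \<open>k\<close> abstracts the index \<open>k\<close> in the readback of \<open>t\<close>; the non-\<open>\<beta>\<close> normal form
  of a pure term instantiates each leading \<open>\<lambda>\<close> with the next index.  Since abstracting and
  instantiating an index both commute with substitution, they preserve head reduction: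
  indexed \<open>\<beta>\<close>-steps become named steps under \<open>\<lambda>\<close> and vice versa, while non-\<open>\<beta>\<close> steps are
  erased by the readback because abstraction undoes instantiation on legal terms.  The two
  normal forms are mutually inverse, and \<open>t\<close> reaches \<open>t\<^sup>*\<^sup>#\<close> by non-\<open>\<beta>\<close> steps alone.\<close>

lemma rtranclp_map_invariant:
  assumes "r\<^sup>*\<^sup>* a b" "P a"
    and preserve: "\<And>x y. r x y \<Longrightarrow> P x \<Longrightarrow> P y"
    and map: "\<And>x y. r x y \<Longrightarrow> P x \<Longrightarrow> s\<^sup>*\<^sup>* (f x) (f y)"
  shows "s\<^sup>*\<^sup>* (f a) (f b)"
proof -
  from assms(1,2) have "s\<^sup>*\<^sup>* (f a) (f b) \<and> P b"
  proof (induction rule: rtranclp_induct)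
    case (step y z)
    then show ?case using preserve map[of y z] rtranclp_trans by metis
  qed simp
  then show ?thesis ..
qed

lemma rtranclp_map:
  assumes "r\<^sup>*\<^sup>* a b" "\<And>x y. r x y \<Longrightarrow> s\<^sup>*\<^sup>* (f x) (f y)"
  shows "s\<^sup>*\<^sup>* (f a) (f b)"
  using rtranclp_map_invariant[where P = "\<lambda>_. True" and f = f] assms by simp

lemma rtranclp_map_step:
  assumes "r\<^sup>*\<^sup>* a b" "\<And>x y. r x y \<Longrightarrow> s (f x) (f y)"
  shows "s\<^sup>*\<^sup>* (f a) (f b)"
  using rtranclp_map[where f = f and s = s, OF assms(1)] assms(2) by blast

lemma rtranclp_invariant:
  assumes "r\<^sup>*\<^sup>* a b" "\<And>x y. r x y \<Longrightarrow> f y = f x"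
  shows "f b = f a"
  using assms by (induction rule: rtranclp_induct) auto

lemma idxs_lift [simp]: "idxs (lift m s) = idxs s"
  by (induction s arbitrary: m) auto

lemma idxs_subst: "idxs (subst v k s) \<subseteq> idxs v \<union> idxs s"
proof (induction v arbitrary: k s)
  case (Lam v)
  then show ?case using Lam[of "Suc k" "lift 0 s"] by auto
next
  case (App a b)
  then show ?case using App(1)[of k s] App(2)[of k s] by fastforce
qed auto

lemma size_subst_Idx [simp]: "size (subst v k (Idx i)) = size v"
  by (induction v arbitrary: k) auto

lemma abst_lift: "m \<le> d \<Longrightarrow> abst i (Suc d) (lift m s) = lift m (abst i d s)"
  by (induction s arbitrary: m d) auto

lemma abst_subst: "k \<le> d \<Longrightarrow> abst i d (subst v k s) = subst (abst i (Suc d) v) k (abst i d s)"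
  by (induction v arbitrary: k d s) (auto simp: abst_lift)

lemma abst_subst_Idx: "i \<notin> idxs v \<Longrightarrow> abst i d (subst v d (Idx i)) = v"
  by (induction v arbitrary: d) auto

lemma subst_Idx_abst: "subst (abst i d v) d (Idx i) = v"
  by (induction v arbitrary: d) auto

lemma subst_Idx_lift: "m \<le> k \<Longrightarrow> subst (lift m u) (Suc k) (Idx i) = lift m (subst u k (Idx i))"
  by (induction u arbitrary: m k) auto

lemma subst_Idx_subst:
  "j \<le> k \<Longrightarrow> subst (subst v j u) k (Idx i) = subst (subst v (Suc k) (Idx i)) j (subst u k (Idx i))"
  by (induction v arbitrary: j k u) (auto simp: subst_Idx_lift)

lemma hred_idxs: "hred a b \<Longrightarrow> idxs b \<subseteq> idxs a"
  by (induction rule: hred.induct) (use idxs_subst in auto)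

lemma hred_abst: "hred a b \<Longrightarrow> hred (abst i d a) (abst i d b)"
proof (induction arbitrary: d rule: hred.induct)
  case (beta v v')
  then show ?case
    using hred.beta[of "abst i (Suc d) v" "abst i d v'"] abst_subst[of 0 d i v v'] by simp
qed (simp add: hred.appL)

lemma hred_subst_Idx: "hred a b \<Longrightarrow> hred (subst a k (Idx i)) (subst b k (Idx i))"
proof (induction arbitrary: k rule: hred.induct)
  case (beta v v')
  then show ?case
    using hred.beta[of "subst v (Suc k) (Idx i)" "subst v' k (Idx i)"] subst_Idx_subst[of 0 k v v' i]
    by simp
qed (simp add: hred.appL)

lemma stepT_abst: "stepT a b \<Longrightarrow> stepT (abst i d a) (abst i d b)"
  by (induction arbitrary: d rule: stepT.induct) (auto intro: stepT.intros hred_abst)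

lemma stepT_subst_Idx: "stepT a b \<Longrightarrow> stepT (subst a k (Idx i)) (subst b k (Idx i))"
  by (induction arbitrary: k rule: stepT.induct) (auto intro: stepT.intros hred_subst_Idx)

lemma rtranclp_stepT_Lam: "stepT\<^sup>*\<^sup>* a b \<Longrightarrow> stepT\<^sup>*\<^sup>* (Lam a) (Lam b)"
  by (erule rtranclp_map_step[where f = Lam]) (rule stepT.L)

lemma rtranclp_stepT_abst: "stepT\<^sup>*\<^sup>* a b \<Longrightarrow> stepT\<^sup>*\<^sup>* (abst i d a) (abst i d b)"
  by (erule rtranclp_map_step[where f = "abst i d"]) (rule stepT_abst)

lemma rtranclp_stepS_at_TLam:
  "(stepS_at (Suc k))\<^sup>*\<^sup>* t u \<Longrightarrow> (stepS_at k)\<^sup>*\<^sup>* (TLam t) (TLam u)"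
  by (erule rtranclp_map_step[where f = TLam]) (rule stepS_at.ctx)

lemma rtranclp_nonbeta_at_TLam:
  "(nonbeta_at (Suc k))\<^sup>*\<^sup>* t u \<Longrightarrow> (nonbeta_at k)\<^sup>*\<^sup>* (TLam t) (TLam u)"
  by (erule rtranclp_map_step[where f = TLam]) (rule nonbeta_at.ctx)

lemma rtranclp_readback_at_TLam:
  "(readback_at (Suc k))\<^sup>*\<^sup>* t u \<Longrightarrow> (readback_at k)\<^sup>*\<^sup>* (TLam t) (TLam u)"
  by (erule rtranclp_map_step[where f = TLam]) (rule readback_at.ctx)

lemma nonbeta_at_imp_stepS_at: "nonbeta_at k t u \<Longrightarrow> stepS_at k t u"
  by (induction rule: nonbeta_at.induct) (auto intro: stepS_at.intros)

lemma rtranclp_nonbeta_at_imp_stepS_at: "(nonbeta_at k)\<^sup>*\<^sup>* t u \<Longrightarrow> (stepS_at k)\<^sup>*\<^sup>* t u"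
  using rtranclp_mono[of "nonbeta_at k" "stepS_at k"] nonbeta_at_imp_stepS_at by blast

lemma legal_at_stepS_at: "stepS_at k t t' \<Longrightarrow> legal_at k t \<Longrightarrow> legal_at k t'"
proof (induction rule: stepS_at.induct)
  case (beta v v' k)
  then show ?case using hred_idxs by fastforce
next
  case (nonbeta k v)
  then show ?case using idxs_subst[of v 0 "Idx k"] by fastforce
qed simp

fun readback :: "nat \<Rightarrow> top \<Rightarrow> trm" where
  "readback k (Tm v) = v"
| "readback k (TLam t) = Lam (abst k 0 (readback (Suc k) t))"

inductive_cases readback_at_TmE [elim!]: "readback_at k (Tm v) u"

lemma readback_at_readback_eq: "readback_at k t u \<Longrightarrow> readback k u = readback k t"
  by (induction rule: readback_at.induct) auto

lemma rtranclp_readback_at_readback: "(readback_at k)\<^sup>*\<^sup>* t (Tm (readback k t))"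
proof (induction t arbitrary: k)
  case (TLam t)
  then have "(readback_at k)\<^sup>*\<^sup>* (TLam t) (TLam (Tm (readback (Suc k) t)))"
    by (rule rtranclp_readback_at_TLam)
  then show ?case by (auto intro: rtranclp.rtrancl_into_rtrancl readback_at.rb)
qed simp

lemma star_eq_readback: "star t = readback 0 t"
  unfolding star_def
proof (rule the_equality)
  show "(readback_at 0)\<^sup>*\<^sup>* t (Tm (readback 0 t)) \<and> (\<nexists>u. readback_at 0 (Tm (readback 0 t)) u)"
    using rtranclp_readback_at_readback by blast
next
  fix v
  assume "(readback_at 0)\<^sup>*\<^sup>* t (Tm v) \<and> (\<nexists>u. readback_at 0 (Tm v) u)"
  then show "v = readback 0 t"
    using rtranclp_invariant[of "readback_at 0" t "Tm v" "readback 0"] readback_at_readback_eq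
    by fastforce
qed

function sharp_at :: "nat \<Rightarrow> trm \<Rightarrow> top" where
  "sharp_at k (Lam v) = TLam (sharp_at (Suc k) (subst v 0 (Idx k)))"
| "sharp_at k (Var n) = Tm (Var n)"
| "sharp_at k (App a b) = Tm (App a b)"
| "sharp_at k (Idx i) = Tm (Idx i)"
  by pat_completeness auto
termination by (relation "measure (\<lambda>(k, v). size v)") auto

fun sharp_top :: "nat \<Rightarrow> top \<Rightarrow> top" where
  "sharp_top k (Tm v) = sharp_at k v"
| "sharp_top k (TLam t) = TLam (sharp_top (Suc k) t)"

inductive_cases nonbeta_at_TmE [elim!]: "nonbeta_at k (Tm v) u"
inductive_cases nonbeta_at_TLamE [elim!]: "nonbeta_at k (TLam t) u"

lemma nonbeta_at_sharp_top_eq: "nonbeta_at k t u \<Longrightarrow> sharp_top k u = sharp_top k t"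
  by (induction rule: nonbeta_at.induct) auto

lemma rtranclp_nonbeta_at_sharp_at: "(nonbeta_at k)\<^sup>*\<^sup>* (Tm v) (sharp_at k v)"
proof (induction k v rule: sharp_at.induct)
  case (1 k v)
  have "nonbeta_at k (Tm (Lam v)) (TLam (Tm (subst v 0 (Idx k))))"
    by (rule nonbeta_at.nonbeta)
  with rtranclp_nonbeta_at_TLam[OF "1"] show ?case
    by (simp add: converse_rtranclp_into_rtranclp)
qed auto

lemma rtranclp_nonbeta_at_sharp_top: "(nonbeta_at k)\<^sup>*\<^sup>* t (sharp_top k t)"
  by (induction t arbitrary: k) (auto intro: rtranclp_nonbeta_at_sharp_at rtranclp_nonbeta_at_TLam)

lemma sharp_at_nonbeta_normal: "\<not> nonbeta_at k (sharp_at k v) u"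
  by (induction k v arbitrary: u rule: sharp_at.induct) auto

lemma sharp_top_nonbeta_normal: "\<nexists>u. nonbeta_at k t u \<Longrightarrow> sharp_top k t = t"
proof (induction t arbitrary: k)
  case (Tm v)
  then show ?case by (cases v) (auto intro: nonbeta_at.nonbeta)
qed (auto intro: nonbeta_at.ctx)

lemma sharp_eq_sharp_at: "sharp v = sharp_at 0 v"
  unfolding sharp_def
proof (rule the_equality)
  show "(nonbeta_at 0)\<^sup>*\<^sup>* (Tm v) (sharp_at 0 v) \<and> (\<nexists>u. nonbeta_at 0 (sharp_at 0 v) u)"
    using rtranclp_nonbeta_at_sharp_at sharp_at_nonbeta_normal by blast
next
  fix t
  assume t: "(nonbeta_at 0)\<^sup>*\<^sup>* (Tm v) t \<and> (\<nexists>u. nonbeta_at 0 t u)"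
  then have "sharp_top 0 t = sharp_at 0 v"
    using rtranclp_invariant[of "nonbeta_at 0" "Tm v" t "sharp_top 0"] nonbeta_at_sharp_top_eq
    by fastforce
  with t sharp_top_nonbeta_normal show "t = sharp_at 0 v" by metis
qed

lemma stepS_at_readback:
  "stepS_at k t t' \<Longrightarrow> legal_at k t \<Longrightarrow> stepT\<^sup>*\<^sup>* (readback k t) (readback k t')"
proof (induction rule: stepS_at.induct)
  case (beta v v' k)
  then show ?case by (auto intro: stepT.E)
next
  case (nonbeta k v)
  then show ?case by (auto simp: abst_subst_Idx)
next
  case (ctx k t t')
  then show ?case by (auto intro: rtranclp_stepT_Lam rtranclp_stepT_abst)
qed

lemma stepT_sharp_at: "stepT v v' \<Longrightarrow> (stepS_at k)\<^sup>*\<^sup>* (sharp_at k v) (sharp_at k v')"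
proof (induction "size v" arbitrary: v v' k rule: less_induct)
  case less
  from less(2) show ?case
  proof cases
    case E
    then obtain a b where "v = App a b" by cases auto
    moreover have "stepS_at k (Tm v) (Tm v')" using E by (rule stepS_at.beta)
    moreover have "(stepS_at k)\<^sup>*\<^sup>* (Tm v') (sharp_at k v')"
      using rtranclp_nonbeta_at_imp_stepS_at rtranclp_nonbeta_at_sharp_at by blast
    ultimately show ?thesis by (simp add: converse_rtranclp_into_rtranclp)
  next
    case (L s s')
    then have "stepT (subst s 0 (Idx k)) (subst s' 0 (Idx k))" and "size (subst s 0 (Idx k)) < size v"
      by (auto intro: stepT_subst_Idx)
    with less(1) L show ?thesis by (simp add: rtranclp_stepS_at_TLam)
  qed
qed

lemma readback_sharp_at: "\<forall>i\<in>idxs v. i < k \<Longrightarrow> readback k (sharp_at k v) = v"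
proof (induction k v rule: sharp_at.induct)
  case (1 k v)
  then have "\<forall>i\<in>idxs (subst v 0 (Idx k)). i < Suc k"
    using idxs_subst[of v 0 "Idx k"] by fastforce
  with 1 have "readback (Suc k) (sharp_at (Suc k) (subst v 0 (Idx k))) = subst v 0 (Idx k)"
    by blast
  moreover have "k \<notin> idxs v" using "1.prems" by auto
  ultimately show ?case by (simp add: abst_subst_Idx)
qed auto

lemma rtranclp_nonbeta_at_readback: "(nonbeta_at k)\<^sup>*\<^sup>* (Tm (readback k t)) t"
proof (induction t arbitrary: k)
  case (TLam t)
  have "nonbeta_at k (Tm (readback k (TLam t))) (TLam (Tm (readback (Suc k) t)))"
    using nonbeta_at.nonbeta[of k "abst k 0 (readback (Suc k) t)"] by (simp add: subst_Idx_abst)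
  with rtranclp_nonbeta_at_TLam[OF TLam] show ?case
    by (simp add: converse_rtranclp_into_rtranclp)
qed simp

lemma sharp_at_readback: "sharp_at k (readback k t) = sharp_top k t"
  using rtranclp_invariant[OF rtranclp_nonbeta_at_readback[of k t], of "sharp_top k"]
    nonbeta_at_sharp_top_eq by simp

theorem theorem4:
  shows "(\<forall>t t'. legal t \<and> legal t' \<and> stepS\<^sup>*\<^sup>* t t' \<longrightarrow> stepT\<^sup>*\<^sup>* (star t) (star t'))
       \<and> (\<forall>v v'. pure v \<and> pure v' \<and> stepT\<^sup>*\<^sup>* v v' \<longrightarrow> stepS\<^sup>*\<^sup>* (sharp v) (sharp v'))
       \<and> (\<forall>t. legal t \<longrightarrow> stepS\<^sup>*\<^sup>* t (sharp (star t)))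
       \<and> (\<forall>v. pure v \<longrightarrow> star (sharp v) = v)"
proof (intro conjI allI impI)
  fix t t'
  assume "legal t \<and> legal t' \<and> stepS\<^sup>*\<^sup>* t t'"
  then have "stepS\<^sup>*\<^sup>* t t'" "legal t" by simp_all
  then show "stepT\<^sup>*\<^sup>* (star t) (star t')"
    unfolding star_eq_readback legal_def stepS_def
    by (rule rtranclp_map_invariant[where f = "readback 0"]) (auto intro: legal_at_stepS_at stepS_at_readback)
next
  fix v v'
  assume "pure v \<and> pure v' \<and> stepT\<^sup>*\<^sup>* v v'"
  then have "stepT\<^sup>*\<^sup>* v v'" by simp
  then show "stepS\<^sup>*\<^sup>* (sharp v) (sharp v')"
    unfolding sharp_eq_sharp_at stepS_def by (rule rtranclp_map[where f = "sharp_at 0"]) (rule stepT_sharp_at)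
next
  fix t
  show "stepS\<^sup>*\<^sup>* t (sharp (star t))"
    unfolding sharp_eq_sharp_at star_eq_readback sharp_at_readback stepS_def
    by (intro rtranclp_nonbeta_at_imp_stepS_at rtranclp_nonbeta_at_sharp_top)
next
  fix v
  assume "pure v"
  then show "star (sharp v) = v"
    unfolding star_eq_readback sharp_eq_sharp_at pure_def by (simp add: readback_sharp_at)
qed

end
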